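(* Let $A>0$, $R_0>0$, and let $f(r,\theta)$ be a function defined for $r\ge R_0$ and $\theta\in[0,A]$. Suppose that $\partial f/\partial\theta$ and $\partial^2 f/\partial\theta^2$ tend to zero uniformly as $r\to\infty$. Then for every sufficiently large $r$, the curve $\theta\in[0,A]\mapsto(r\cos\theta, r\sin\theta,\theta+f(r,\theta))$ has total curvature strictly less than $A$. *)

theory Defs
  imports "HOL-Analysis.Analysis" "HOL-Analysis.Cross3"
begin

definition velocity :: "(real \<Rightarrow> real^3) \<Rightarrow> real \<Rightarrow> real \<Rightarrow> real \<Rightarrow> real^3" where
  "velocity g a b t = vector_derivative g (at t within {a..b})"

definition acceleration :: "(real \<Rightarrow> real^3) \<Rightarrow> real \<Rightarrow> real \<Rightarrow> real \<Rightarrow> real^3" where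
  "acceleration g a b t = vector_derivative (velocity g a b) (at t within {a..b})"

definition curvature :: "(real \<Rightarrow> real^3) \<Rightarrow> real \<Rightarrow> real \<Rightarrow> real \<Rightarrow> real" where
  "curvature g a b t =
     norm (cross3 (velocity g a b t) (acceleration g a b t)) / norm (velocity g a b t) ^ 3"

definition total_curvature :: "(real \<Rightarrow> real^3) \<Rightarrow> real \<Rightarrow> real \<Rightarrow> real" where
  "total_curvature g a b = integral {a..b} (\<lambda>t. curvature g a b t * norm (velocity g a b t))"

end

theory Submission imports Defs begin

(* The curve has velocity v = (-r sin t, r cos t, 1 + f') and acceleration
   a = (-r cos t, -r sin t, f''), so its curvature density \<kappa> |v| = |v \<times> a| / |v|^2 satisfies
   (\<kappa> |v|)^2 = (r^4 + r^2 ((1 + f')^2 + f''^2)) / (r^2 + (1 + f')^2)^2.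
   Once |f'|, |f''| < 1/4 the denominator exceeds the numerator by at least r^2/2, so the density
   is bounded by a constant c(r) < 1 and the total curvature is at most c(r) A < A.
   Integrability of the density comes from its measurability, inherited from f' and f''
   being derivatives. *)

lemma has_vector_derivative_vector3:
  assumes "(a has_real_derivative a') F" "(b has_real_derivative b') F"
    and "(c has_real_derivative c') F"
  shows "((\<lambda>t. vector [a t, b t, c t] :: real^3) has_vector_derivative vector [a', b', c']) F"
proof -
  have vector3_eq: "\<And>x y z. (vector [x, y, z] :: real^3) =
      x *\<^sub>R axis 1 1 + y *\<^sub>R axis 2 1 + z *\<^sub>R axis 3 1"
    by (simp add: vec_eq_iff forall_3 axis_def)
  have scaleR: "((\<lambda>t. u t *\<^sub>R v) has_vector_derivative u' *\<^sub>R v) F"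
    if "(u has_real_derivative u') F" for u u' and v :: "real^3"
    using bounded_linear.has_vector_derivative[OF bounded_linear_scaleR_left] that
    by (simp add: has_real_derivative_iff_has_vector_derivative)
  show ?thesis
    unfolding vector3_eq by (intro has_vector_derivative_add scaleR assms)
qed

lemma norm_vector3: "norm (vector [a, b, c] :: real^3) = sqrt (a\<^sup>2 + b\<^sup>2 + c\<^sup>2)"
  by (simp add: norm_eq_sqrt_inner inner_vec_def sum_3 power2_eq_square)

lemma cross3_vector3:
  "cross3 (vector [a, b, c]) (vector [d, e, f]) =
     (vector [b * f - c * e, c * d - a * f, a * e - b * d] :: real^3)"
  by (simp add: cross3_def vec_eq_iff forall_3)

lemma velocity_eqI:
  assumes "a < b" "t \<in> {a..b}" "(g has_vector_derivative v) (at t within {a..b})"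
  shows "velocity g a b t = v"
  unfolding velocity_def by (rule vector_derivative_within_closed_interval[OF assms])

lemma acceleration_eqI:
  assumes ab: "a < b" and t: "t \<in> {a..b}"
    and g: "\<And>s. s \<in> {a..b} \<Longrightarrow> (g has_vector_derivative V s) (at s within {a..b})"
    and V: "(V has_vector_derivative w) (at t within {a..b})"
  shows "acceleration g a b t = w"
proof -
  have "(velocity g a b has_vector_derivative w) (at t within {a..b})"
    by (rule has_vector_derivative_weaken[OF V t order_refl]) (simp add: velocity_eqI[OF ab _ g])
  then show ?thesis
    unfolding acceleration_def by (rule vector_derivative_within_closed_interval[OF ab t])
qed

text \<open>No regularity is needed: for a vanishing velocity both sides are 0 by division by zero.\<close>
lemma curvature_mult_norm_velocity:
  "curvature g a b t * norm (velocity g a b t) =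
     norm (cross3 (velocity g a b t) (acceleration g a b t)) / norm (velocity g a b t) ^ 2"
proof -
  have "x / n ^ 3 * n = x / n ^ 2" for x n :: real
    by (cases "n = 0") (simp_all add: power3_eq_cube power2_eq_square)
  then show ?thesis
    unfolding curvature_def .
qed

lemma helix_density_sq_le:
  fixes r u w :: real
  assumes "r \<noteq> 0" and u: "9/16 \<le> u" "u \<le> 25/16" and w: "w \<le> 1/16"
  shows "(r ^ 4 + r\<^sup>2 * (u + w)) / (r\<^sup>2 + u)\<^sup>2 \<le> 1 - r\<^sup>2 / (2 * (r\<^sup>2 + 2)\<^sup>2)"
proof -
  define \<delta> where "\<delta> = r\<^sup>2 / (2 * (r\<^sup>2 + 2)\<^sup>2)"
  have r2: "r\<^sup>2 > 0"
    using assms(1) by simp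
  have "\<delta> * (r\<^sup>2 + u)\<^sup>2 \<le> \<delta> * (r\<^sup>2 + 2)\<^sup>2"
    using u r2 unfolding \<delta>_def by (intro mult_left_mono power_mono) auto
  also have "\<dots> = r\<^sup>2 * (1/2)"
    using add_pos_pos[OF r2, of 2] unfolding \<delta>_def by simp
  also have "\<dots> \<le> r\<^sup>2 * (u - w)"
    using u w r2 by (intro mult_left_mono) auto
  also have "\<dots> \<le> r\<^sup>2 * (u - w) + u\<^sup>2"
    by simp
  finally have "r ^ 4 + r\<^sup>2 * (u + w) \<le> (1 - \<delta>) * (r\<^sup>2 + u)\<^sup>2"
    by (simp add: algebra_simps power2_eq_square power4_eq_xxxx)
  moreover have "r\<^sup>2 + u > 0"
    using r2 u by linarith
  ultimately show ?thesis
    unfolding \<delta>_def by (simp add: pos_divide_le_eq)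
qed

lemma helix_curvature_density_le:
  fixes r p q t :: real
  assumes r: "r > 0" and p: "\<bar>p\<bar> < 1/4" and q: "\<bar>q\<bar> < 1/4"
  defines "v \<equiv> vector [- (r * sin t), r * cos t, 1 + p] :: real^3"
    and "w \<equiv> vector [- (r * cos t), - (r * sin t), q] :: real^3"
  shows "norm (cross3 v w) / norm v ^ 2 \<le> sqrt (1 - r\<^sup>2 / (2 * (r\<^sup>2 + 2)\<^sup>2))"
proof -
  define u where "u = (1 + p)\<^sup>2"
  have "(3/4)\<^sup>2 \<le> u" "u \<le> (5/4)\<^sup>2"
    unfolding u_def using p by (auto intro!: power_mono)
  then have u_bounds: "9/16 \<le> u" "u \<le> 25/16"
    by (simp_all add: power2_eq_square)
  have "\<bar>q\<bar>\<^sup>2 \<le> (1/4)\<^sup>2"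
    using q by (intro power_mono) auto
  then have q2: "q\<^sup>2 \<le> 1/16"
    by (simp add: power2_eq_square)
  have sum_sq: "(c * q - P * - s)\<^sup>2 + (P * - c - - s * q)\<^sup>2 + (- s * - s - c * - c)\<^sup>2
      = (s\<^sup>2 + c\<^sup>2) * (P\<^sup>2 + q\<^sup>2) + (s\<^sup>2 + c\<^sup>2)\<^sup>2" for c s P :: real
    by (simp add: power2_eq_square algebra_simps)
  have sin_cos: "(r * sin t)\<^sup>2 + (r * cos t)\<^sup>2 = r\<^sup>2"
    by (simp add: power_mult_distrib flip: distrib_left)
  have norm_v: "norm v ^ 2 = r\<^sup>2 + u"
    unfolding v_def norm_vector3 u_def using sin_cos by simp
  have cross_norm: "norm (cross3 v w) = sqrt (r ^ 4 + r\<^sup>2 * (u + q\<^sup>2))"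
    unfolding v_def w_def cross3_vector3 norm_vector3 sum_sq sin_cos u_def by simp
  have "r\<^sup>2 + u > 0"
    using r u_bounds by (simp add: add_pos_pos)
  then have "norm (cross3 v w) / norm v ^ 2 = sqrt ((r ^ 4 + r\<^sup>2 * (u + q\<^sup>2)) / (r\<^sup>2 + u)\<^sup>2)"
    unfolding cross_norm norm_v by (simp add: real_sqrt_divide)
  also have "\<dots> \<le> sqrt (1 - r\<^sup>2 / (2 * (r\<^sup>2 + 2)\<^sup>2))"
    using r u_bounds q2 by (intro real_sqrt_le_mono helix_density_sq_le) auto
  finally show ?thesis .
qed

lemma derivative_borel_measurable_on_interval:
  assumes "a \<le> b"
    and "\<And>t. t \<in> {a..b} \<Longrightarrow> (F has_real_derivative F' t) (at t within {a..b})"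
  shows "F' \<in> borel_measurable (lebesgue_on {a..b})"
proof -
  have "(F' has_integral (F b - F a)) {a..b}"
    by (rule fundamental_theorem_of_calculus[OF assms(1)])
      (simp add: assms(2) flip: has_real_derivative_iff_has_vector_derivative)
  then show ?thesis
    by (intro integrable_imp_measurable has_integral_integrable)
qed

lemma helix_curvature_density:
  fixes f f' f'' :: "real \<Rightarrow> real" and a b r t :: real
  assumes ab: "a < b" and t: "t \<in> {a..b}"
    and d1: "\<And>s. s \<in> {a..b} \<Longrightarrow> (f has_real_derivative f' s) (at s within {a..b})"
    and d2: "\<And>s. s \<in> {a..b} \<Longrightarrow> (f' has_real_derivative f'' s) (at s within {a..b})"
  defines "g \<equiv> \<lambda>s. vector [r * cos s, r * sin s, s + f s] :: real^3"
    and "V \<equiv> \<lambda>s. vector [- (r * sin s), r * cos s, 1 + f' s] :: real^3"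
  shows "curvature g a b t * norm (velocity g a b t) =
    norm (cross3 (V t) (vector [- (r * cos t), - (r * sin t), f'' t])) / norm (V t) ^ 2"
proof -
  have g_deriv: "(g has_vector_derivative V s) (at s within {a..b})" if "s \<in> {a..b}" for s
    unfolding g_def V_def using d1[OF that]
    by (intro has_vector_derivative_vector3) (auto intro!: derivative_eq_intros)
  have "(V has_vector_derivative vector [- (r * cos t), - (r * sin t), f'' t]) (at t within {a..b})"
    unfolding V_def using d2[OF t]
    by (intro has_vector_derivative_vector3) (auto intro!: derivative_eq_intros)
  then have "acceleration g a b t = vector [- (r * cos t), - (r * sin t), f'' t]"
    using ab t g_deriv by (intro acceleration_eqI)
  moreover have "velocity g a b t = V t"
    using ab t g_deriv[OF t] by (rule velocity_eqI)
  ultimately show ?thesis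
    unfolding curvature_mult_norm_velocity by simp
qed

theorem helix_total_curvature_lt:
  fixes f f' f'' :: "real \<Rightarrow> real" and a b r :: real
  assumes ab: "a < b" and r: "r > 0"
    and d1: "\<And>t. t \<in> {a..b} \<Longrightarrow> (f has_real_derivative f' t) (at t within {a..b})"
    and d2: "\<And>t. t \<in> {a..b} \<Longrightarrow> (f' has_real_derivative f'' t) (at t within {a..b})"
    and small: "\<And>t. t \<in> {a..b} \<Longrightarrow> \<bar>f' t\<bar> < 1/4 \<and> \<bar>f'' t\<bar> < 1/4"
  defines "g \<equiv> \<lambda>t. vector [r * cos t, r * sin t, t + f t] :: real^3"
  shows "(\<lambda>t. curvature g a b t * norm (velocity g a b t)) integrable_on {a..b}
    \<and> total_curvature g a b < b - a"
proof -
  define K where "K t =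
    norm (cross3 (vector [- (r * sin t), r * cos t, 1 + f' t])
                 (vector [- (r * cos t), - (r * sin t), f'' t]) :: real^3)
      / norm (vector [- (r * sin t), r * cos t, 1 + f' t] :: real^3) ^ 2" for t
  define c where "c = sqrt (1 - r\<^sup>2 / (2 * (r\<^sup>2 + 2)\<^sup>2))"
  have density: "curvature g a b t * norm (velocity g a b t) = K t" if "t \<in> {a..b}" for t
    unfolding g_def K_def by (rule helix_curvature_density[OF ab that d1 d2])
  have K_le: "\<bar>K t\<bar> \<le> c" if "t \<in> {a..b}" for t
    unfolding K_def c_def using helix_curvature_density_le[OF r] small[OF that] by simp
  have "r\<^sup>2 + 2 > 0"
    by (simp add: add_nonneg_pos)
  then have "r\<^sup>2 / (2 * (r\<^sup>2 + 2)\<^sup>2) > 0"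
    using r by simp
  then have c_lt_1: "c < 1"
    unfolding c_def by simp
  have [measurable]: "f' \<in> borel_measurable (lebesgue_on {a..b})"
    "f'' \<in> borel_measurable (lebesgue_on {a..b})"
    using derivative_borel_measurable_on_interval[OF less_imp_le[OF ab]] d1 d2 by blast+
  have [measurable]: "(\<lambda>t. t) \<in> borel_measurable (lebesgue_on {a..b})"
    by (rule continuous_imp_measurable_on_sets_lebesgue[OF continuous_on_id]) simp
  have "K \<in> borel_measurable (lebesgue_on {a..b})"
    unfolding K_def cross3_vector3 norm_vector3 by measurable
  then have K_int: "K integrable_on {a..b}"
    by (rule measurable_bounded_by_integrable_imp_integrable[OF _ integrable_const_ivl[of c]])
      (simp_all add: K_le)
  have "total_curvature g a b = integral {a..b} K"
    unfolding total_curvature_def by (rule integral_cong) (rule density)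
  also have "\<dots> \<le> integral {a..b} (\<lambda>_. c)"
    by (rule integral_le[OF K_int integrable_const_ivl]) (use K_le abs_le_D1 in blast)
  also have "\<dots> < b - a"
    using ab c_lt_1 by simp
  finally show ?thesis
    using integrable_eq[OF K_int density[symmetric]] by blast
qed

theorem lemma3p2:
  fixes f f1 f2 :: "real \<Rightarrow> real \<Rightarrow> real" and A R0 :: real
  assumes A_pos: "A > 0" and R0_pos: "R0 > 0"
    and d1: "\<And>r \<theta>. r \<ge> R0 \<Longrightarrow> \<theta> \<in> {0..A} \<Longrightarrow>
               ((\<lambda>t. f r t) has_real_derivative f1 r \<theta>) (at \<theta> within {0..A})"
    and d2: "\<And>r \<theta>. r \<ge> R0 \<Longrightarrow> \<theta> \<in> {0..A} \<Longrightarrow>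
               ((\<lambda>t. f1 r t) has_real_derivative f2 r \<theta>) (at \<theta> within {0..A})"
    and unif: "\<And>\<epsilon>. \<epsilon> > 0 \<Longrightarrow> \<exists>R. \<forall>r\<ge>R. \<forall>\<theta>\<in>{0..A}. \<bar>f1 r \<theta>\<bar> < \<epsilon> \<and> \<bar>f2 r \<theta>\<bar> < \<epsilon>"
  shows "\<exists>R\<ge>R0. \<forall>r\<ge>R.
           (\<lambda>\<theta>. curvature (\<lambda>t. vector [r * cos t, r * sin t, t + f r t]) 0 A \<theta>
                 * norm (velocity (\<lambda>t. vector [r * cos t, r * sin t, t + f r t]) 0 A \<theta>))
             integrable_on {0..A}
         \<and> total_curvature (\<lambda>t. vector [r * cos t, r * sin t, t + f r t]) 0 A < A"
proof -
  define \<gamma> where "\<gamma> r t = (vector [r * cos t, r * sin t, t + f r t] :: real^3)" for r t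
  obtain R1 where R1: "\<forall>r\<ge>R1. \<forall>\<theta>\<in>{0..A}. \<bar>f1 r \<theta>\<bar> < 1/4 \<and> \<bar>f2 r \<theta>\<bar> < 1/4"
    using unif[of "1/4"] by auto
  have "(\<lambda>\<theta>. curvature (\<gamma> r) 0 A \<theta> * norm (velocity (\<gamma> r) 0 A \<theta>)) integrable_on {0..A}
      \<and> total_curvature (\<gamma> r) 0 A < A"
    if r: "max R0 R1 \<le> r" for r
  proof -
    have "R0 \<le> r" "r > 0"
      using r R0_pos by auto
    moreover have "\<bar>f1 r \<theta>\<bar> < 1/4 \<and> \<bar>f2 r \<theta>\<bar> < 1/4" if "\<theta> \<in> {0..A}" for \<theta>
      using R1 r that by auto
    ultimately show ?thesis
      using helix_total_curvature_lt[OF A_pos _ d1 d2] unfolding \<gamma>_def by simp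
  qed
  then show ?thesis
    unfolding \<gamma>_def by (intro exI[of _ "max R0 R1"]) auto
qed

end
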